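(* There is a constant $C_2>0$ such that for every analytic function $f\colon\mathbb{D}\to G$ and every $\lambda>0$, $$\mathcal{A}(\{z\in\mathbb{D}:|f(z)|>\lambda\})\le\frac{C_2}{\lambda^4}\,|f(0)|^4.$$ In particular, there is a constant $K_2>0$ such that $\|f\|_{L^2(\mathbb{D},\mathcal{A})}\le K_2|f(0)|$ for every such function.
   Context: $\mathbb{D}$ is the open unit disk, $\mathcal{A}$ the normalized area measure $dx\,dy/\pi$ on $\mathbb{D}$, and $G=\{z\in\mathbb{C}\setminus\{0\}:|\arg z|<\pi/4\}$. *)

theory Defs
  imports "HOL-Complex_Analysis.Complex_Analysis"
begin

definition diskA :: "complex measure" where
  "diskA = density lborel (\<lambda>z. ennreal (indicator (ball (0::complex) 1) z / pi))"

definition sectorG :: "complex set" where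
  "sectorG = {z. z \<noteq> 0 \<and> \<bar>Arg z\<bar> < pi / 4}"

end

theory Submission
  imports Defs
begin

text \<open>
  Squaring maps the sector \<open>G\<close> into the right half-plane, so it suffices to show
  \<open>|{|h| > \<mu>}| \<le> C (|h 0| / \<mu>)\<^sup>2\<close> for holomorphic \<open>h\<close> on the disc with \<open>Re h > 0\<close>.
  The Schwarz lemma applied to the Cayley transform of \<open>h\<close> gives \<open>|h z| (1 - |z|) \<le> 2 |h 0|\<close>,
  so \<open>{|h| > \<mu>}\<close> lies in the annulus \<open>1 - 2 |h 0| / \<mu> < |z| < 1\<close>, of area \<open>O(|h 0| / \<mu>)\<close>.
  There the bounded holomorphic function \<open>2 h / (h + \<mu>)\<close> has real part at least \<open>1\<close>, while by
  the mean value property on the rotation-invariant annulus its integral equals the area times its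
  value at \<open>0\<close>, which is at most \<open>2 |h 0| / \<mu>\<close>. Rotation invariance of Lebesgue measure on \<open>\<complex>\<close>
  comes from writing a rotation as a product of three shears. The \<open>L\<^sup>2\<close> bound follows from the
  weak-type bound by summing over dyadic levels of \<open>|f|\<^sup>2\<close>.
\<close>

lemma lborel_pair_shear_snd:
  fixes g :: "real \<Rightarrow> real"
  assumes [measurable]: "g \<in> borel_measurable borel"
  shows "distr lborel borel (\<lambda>(x, y). (x, y + g x)) = (lborel :: (real \<times> real) measure)"
proof (rule measure_eqI)
  fix A :: "(real \<times> real) set"
  assume "A \<in> sets (distr lborel borel (\<lambda>(x, y). (x, y + g x)))"
  then have A_borel: "A \<in> sets borel" and A: "A \<in> sets (lborel \<Otimes>\<^sub>M lborel)"
    by (simp_all only: sets_distr lborel_prod sets_lborel)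
  have shear_borel: "(\<lambda>(x, y). (x, y + g x)) \<in> borel_measurable (borel :: (real \<times> real) measure)"
    unfolding borel_prod[symmetric] by measurable
  have shear: "(\<lambda>(x, y). (x, y + g x)) \<in> lborel \<Otimes>\<^sub>M lborel \<rightarrow>\<^sub>M lborel \<Otimes>\<^sub>M lborel"
    by measurable
  have shear_A: "(\<lambda>(x, y). (x, y + g x)) -` A \<in> sets (lborel \<Otimes>\<^sub>M lborel)"
    using measurable_sets[OF shear A] by (simp add: space_pair_measure)
  have fibre: "Pair x -` (\<lambda>(x, y). (x, y + g x)) -` A = (+) (g x) -` Pair x -` A" for x
    by (auto simp: add.commute)
  have "emeasure (distr lborel borel (\<lambda>(x, y). (x, y + g x))) A
      = emeasure (lborel \<Otimes>\<^sub>M lborel) ((\<lambda>(x, y). (x, y + g x)) -` A)"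
    using A_borel shear_borel by (simp add: emeasure_distr lborel_prod)
  also have "\<dots> = (\<integral>\<^sup>+x. emeasure lborel ((+) (g x) -` Pair x -` A) \<partial>lborel)"
    using lborel.emeasure_pair_measure_alt[OF shear_A] by (simp add: fibre)
  also have "\<dots> = (\<integral>\<^sup>+x. emeasure lborel (Pair x -` A) \<partial>lborel)"
  proof (intro nn_integral_cong)
    fix x
    have "Pair x -` A \<in> sets borel"
      using sets_Pair1[OF A] by simp
    then have "emeasure lborel ((+) (g x) -` Pair x -` A) = emeasure (distr lborel borel ((+) (g x))) (Pair x -` A)"
      by (simp add: emeasure_distr)
    then show "emeasure lborel ((+) (g x) -` Pair x -` A) = emeasure lborel (Pair x -` A)"
      by (simp only: lborel_distr_plus)
  qed
  also have "\<dots> = emeasure lborel A"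
    using lborel.emeasure_pair_measure_alt[OF A] by (simp add: lborel_prod)
  finally show "emeasure (distr lborel borel (\<lambda>(x, y). (x, y + g x))) A = emeasure lborel A" .
qed simp

lemma distr_lborel_comp:
  fixes f :: "'a::euclidean_space \<Rightarrow> 'b::euclidean_space" and g :: "'b \<Rightarrow> 'c::euclidean_space"
  assumes "f \<in> borel_measurable borel" "g \<in> borel_measurable borel"
    and "distr lborel borel f = lborel" "distr lborel borel g = lborel"
  shows "distr lborel borel (g \<circ> f) = lborel"
  using assms by (subst distr_distr[symmetric]) auto

lemma lborel_pair_swap:
  "distr lborel borel (\<lambda>(x, y). (y, x)) = (lborel :: (real \<times> real) measure)"
proof -
  have "distr lborel borel (\<lambda>(x, y). (y, x)) = distr lborel lborel (\<lambda>(x::real, y::real). (y, x))"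
    by (rule distr_cong) auto
  then show ?thesis
    using lborel_pair.distr_pair_swap[symmetric] by (simp add: lborel_prod)
qed

lemma lborel_pair_shear_fst:
  fixes g :: "real \<Rightarrow> real"
  assumes [measurable]: "g \<in> borel_measurable borel"
  shows "distr lborel borel (\<lambda>(x, y). (x + g y, y)) = (lborel :: (real \<times> real) measure)"
proof -
  have swap[measurable]: "(\<lambda>(x, y). (y, x)) \<in> borel_measurable (borel :: (real \<times> real) measure)"
    unfolding borel_prod[symmetric] by measurable
  have shear[measurable]: "(\<lambda>(x, y). (x, y + g x)) \<in> borel_measurable (borel :: (real \<times> real) measure)"
    unfolding borel_prod[symmetric] by measurable
  have "(\<lambda>(x, y). (x + g y, y)) = (\<lambda>(x, y). (y, x)) \<circ> ((\<lambda>(x, y). (x, y + g x)) \<circ> (\<lambda>(x, y). (y, x)))"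
    by (auto simp: fun_eq_iff)
  then show ?thesis
    by (simp only:) (intro distr_lborel_comp measurable_comp[where N=borel] swap shear
        lborel_pair_swap lborel_pair_shear_snd assms)
qed

lemma lborel_pair_rotation:
  fixes a b :: real
  assumes "a\<^sup>2 + b\<^sup>2 = 1"
  shows "distr lborel borel (\<lambda>(x, y). (a * x - b * y, b * x + a * y)) = (lborel :: (real \<times> real) measure)"
proof -
  have paeth: "distr lborel borel (\<lambda>(x, y). (a * x - b * y, b * x + a * y)) = (lborel :: (real \<times> real) measure)"
    if ab: "a\<^sup>2 + b\<^sup>2 = 1" "1 + a \<noteq> 0" for a b :: real
  proof -
    \<comment> \<open>Paeth's decomposition into three shears, with \<open>t = - tan (\<theta> / 2)\<close> for the angle \<open>\<theta>\<close>.\<close>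
    define t where "t = - b / (1 + a)"
    have tb: "1 + t * b = a"
      using ab by (auto simp: t_def field_simps power2_eq_square)
    have "t * (2 + t * b) = t * (1 + a)"
      using tb by simp
    also have "\<dots> = - b"
      using ab by (simp add: t_def)
    finally have tt: "t * (2 + t * b) = - b" .
    define Sx :: "real \<times> real \<Rightarrow> real \<times> real" where "Sx = (\<lambda>(x, y). (x + t * y, y))"
    define Sy :: "real \<times> real \<Rightarrow> real \<times> real" where "Sy = (\<lambda>(x, y). (x, y + b * x))"
    have [measurable]: "Sx \<in> borel_measurable borel" "Sy \<in> borel_measurable borel"
      unfolding Sx_def Sy_def borel_prod[symmetric] by measurable
    have "distr lborel borel Sx = lborel" "distr lborel borel Sy = lborel"
      unfolding Sx_def Sy_def by (intro lborel_pair_shear_snd lborel_pair_shear_fst; simp)+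
    moreover have "(\<lambda>(x, y). (a * x - b * y, b * x + a * y)) = Sx \<circ> (Sy \<circ> Sx)"
    proof (clarsimp simp: fun_eq_iff)
      fix x y
      have "Sx (Sy (Sx (x, y))) = ((1 + t * b) * x + t * (2 + t * b) * y, b * x + (1 + t * b) * y)"
        by (simp add: Sx_def Sy_def algebra_simps)
      then show "(a * x - b * y, b * x + a * y) = Sx (Sy (Sx (x, y)))"
        by (simp add: tb tt)
    qed
    ultimately show ?thesis
      by (simp add: distr_lborel_comp)
  qed
  show ?thesis
  proof (cases "a = -1")
    case True
    then have "b = 0"
      using assms by simp
    have quarter: "(\<lambda>(x, y). (- y, x)) \<in> borel_measurable (borel :: (real \<times> real) measure)"
      unfolding borel_prod[symmetric] by measurable
    have "(\<lambda>(x, y). (a * x - b * y, b * x + a * y)) = (\<lambda>(x, y). (- y, x)) \<circ> (\<lambda>(x, y). (- y, x))"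
      using True \<open>b = 0\<close> by (auto simp: fun_eq_iff)
    then show ?thesis
      using paeth[of 0 1] by (simp add: distr_lborel_comp quarter)
  qed (use paeth assms in auto)
qed

lemma borel_measurable_Complex_pair [measurable]:
  "(\<lambda>(x, y). Complex x y) \<in> borel_measurable (borel :: (real \<times> real) measure)"
proof -
  have "(\<lambda>(x, y). Complex x y) = (\<lambda>p. complex_of_real (fst p) + \<i> * complex_of_real (snd p))"
    by (auto simp: complex_eq_iff)
  then show ?thesis
    by (simp only:) (intro borel_measurable_continuous_onI continuous_intros)
qed

lemma distr_Complex_lborel:
  "distr (lborel :: (real \<times> real) measure) borel (\<lambda>(x, y). Complex x y) = (lborel :: complex measure)"
proof (rule lborel_eqI[symmetric])
  fix l u :: complex
  assume le: "\<And>b. b \<in> Basis \<Longrightarrow> l \<bullet> b \<le> u \<bullet> b"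
  then have "Re l \<le> Re u" "Im l \<le> Im u"
    using le[of 1] le[of \<i>] by (auto simp: Basis_complex_def)
  have "(\<lambda>(x, y). Complex x y) -` box l u = {Re l<..<Re u} \<times> {Im l<..<Im u}"
    by (auto simp: box_def Basis_complex_def)
  then have "emeasure (distr lborel borel (\<lambda>(x, y). Complex x y)) (box l u)
      = emeasure (lborel \<Otimes>\<^sub>M lborel) ({Re l<..<Re u} \<times> {Im l<..<Im u})"
    by (subst emeasure_distr) (simp_all add: lborel_prod)
  also have "\<dots> = (\<Prod>b\<in>Basis. (u - l) \<bullet> b)"
    using \<open>Re l \<le> Re u\<close> \<open>Im l \<le> Im u\<close>
    by (simp add: lborel.emeasure_pair_measure_Times Basis_complex_def ennreal_mult)
  finally show "emeasure (distr lborel borel (\<lambda>(x, y). Complex x y)) (box l u) = (\<Prod>b\<in>Basis. (u - l) \<bullet> b)" .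
qed simp

lemma lborel_distr_mult_unimodular:
  fixes c :: complex
  assumes "norm c = 1"
  shows "distr lborel borel (\<lambda>z. c * z) = (lborel :: complex measure)"
proof -
  let ?R = "\<lambda>(x, y). (Re c * x - Im c * y, Im c * x + Re c * y)"
  have R: "distr lborel borel ?R = lborel"
    using assms by (intro lborel_pair_rotation) (simp add: norm_complex_def)
  have [measurable]: "?R \<in> borel_measurable borel"
    unfolding borel_prod[symmetric] by measurable
  have [measurable]: "(\<lambda>z. c * z) \<in> borel_measurable borel"
    by (intro borel_measurable_continuous_onI continuous_intros)
  have "(\<lambda>z. c * z) \<circ> (\<lambda>(x, y). Complex x y) = (\<lambda>(x, y). Complex x y) \<circ> ?R"
    by (auto simp: fun_eq_iff complex_eq_iff)
  then have "distr (distr lborel borel (\<lambda>(x, y). Complex x y)) borel (\<lambda>z. c * z)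
      = distr (distr lborel borel ?R) borel (\<lambda>(x, y). Complex x y)"
    by (simp add: distr_distr)
  then show ?thesis
    by (simp only: R distr_Complex_lborel)
qed

lemma lborel_integral_rotate:
  fixes F :: "complex \<Rightarrow> 'a::{banach, second_countable_topology}"
  assumes "norm c = 1" and [measurable]: "F \<in> borel_measurable borel"
  shows "(\<integral>z. F (c * z) \<partial>lborel) = (\<integral>z. F z \<partial>lborel)"
proof -
  have [measurable]: "(\<lambda>z. c * z) \<in> borel_measurable borel"
    by (intro borel_measurable_continuous_onI continuous_intros)
  have "(\<integral>z. F z \<partial>lborel) = (\<integral>z. F z \<partial>distr lborel borel (\<lambda>z. c * z))"
    by (simp only: lborel_distr_mult_unimodular[OF assms(1)])
  also have "\<dots> = (\<integral>z. F (c * z) \<partial>lborel)"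
    by (subst integral_distr) simp_all
  finally show ?thesis ..
qed

lemma holomorphic_circle_mean:
  assumes G: "G holomorphic_on ball 0 1" and z: "z \<in> ball 0 1"
  shows "((\<lambda>t. G (exp (2 * of_real pi * \<i> * of_real t) * z)) has_integral G 0) {0..1}"
proof -
  define K where "K = (\<lambda>u. G (u * z))"
  have "(\<lambda>u. u * z) ` cball 0 1 \<subseteq> ball 0 1"
    using z by (auto simp: norm_mult) (smt (verit) mult_left_le_one_le norm_ge_zero)
  then have "K holomorphic_on cball 0 1"
    unfolding K_def by (intro holomorphic_on_compose_gen[unfolded o_def, OF _ G]) (auto intro!: holomorphic_intros)
  then have "((\<lambda>u. K u / u) has_contour_integral 2 * of_real pi * \<i> * K 0) (circlepath 0 1)"
    using Cauchy_integral_circlepath_simple[of K 0 1 0] by simp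
  then have "((\<lambda>t. (2 * of_real pi * \<i>) * K (exp (2 * of_real pi * \<i> * of_real t)))
      has_integral (2 * of_real pi * \<i>) * K 0) {0..1}"
    unfolding has_contour_integral_def
    by (rule has_integral_eq[rotated]) (subst vector_derivative_circlepath01; simp add: circlepath)
  then show ?thesis
    by (simp add: has_integral_mult_right_iff K_def)
qed

lemma holomorphic_area_mean_rotation_invariant:
  fixes G :: "complex \<Rightarrow> complex" and S :: "complex set"
  assumes G: "G holomorphic_on ball 0 1" and bounded: "\<And>z. z \<in> ball 0 1 \<Longrightarrow> norm (G z) \<le> B"
    and S: "S \<in> sets borel" "S \<subseteq> ball 0 1"
    and rotate: "\<And>c z. norm c = 1 \<Longrightarrow> c * z \<in> S \<longleftrightarrow> z \<in> S"
  shows "(\<integral>z. indicator S z *\<^sub>R G z \<partial>lborel) = measure lborel S *\<^sub>R G 0"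
proof -
  define e :: "real \<Rightarrow> complex" where "e t = exp (2 * of_real pi * \<i> * of_real t)" for t
  define H where "H z = indicator S z *\<^sub>R G z" for z
  have norm_e: "norm (e t) = 1" for t
    by (simp add: e_def norm_exp_eq_Re)
  have [measurable]: "e \<in> borel_measurable borel"
    unfolding e_def by (intro borel_measurable_continuous_onI continuous_intros)
  have [measurable]: "H \<in> borel_measurable borel"
    unfolding H_def using S holomorphic_on_imp_continuous_on[OF holomorphic_on_subset[OF G S(2)]]
    by (intro borel_measurable_continuous_on_indicator)
  have H_rotate: "H (e t * z) = indicator S z *\<^sub>R G (e t * z)" for t z
    by (simp add: H_def indicator_def rotate[OF norm_e])
  have finite_S: "emeasure lborel S < \<infinity>"
    using S(2) by (intro emeasure_bounded_finite bounded_subset[OF bounded_ball])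
  have circle: "(\<integral>t. indicator {0..1} t *\<^sub>R H (e t * z) \<partial>lborel) = indicator S z *\<^sub>R G 0" for z
  proof (cases "z \<in> S")
    case True
    then have z: "z \<in> ball 0 1"
      using S by blast
    have "continuous_on {0..1} (\<lambda>t. G (e t * z))"
      using z unfolding e_def
      by (intro continuous_on_compose2[OF holomorphic_on_imp_continuous_on[OF G]] continuous_intros)
        (auto simp: norm_mult norm_e[unfolded e_def])
    then have "set_integrable lborel {0..1} (\<lambda>t. G (e t * z))"
      unfolding set_integrable_def by (intro borel_integrable_compact) auto
    from set_borel_integral_eq_integral(2)[OF this] holomorphic_circle_mean[OF G z, folded e_def]
    show ?thesis
      using True by (simp add: H_rotate set_lebesgue_integral_def integral_unique)
  qed (simp add: H_rotate)
  have "integrable (lborel \<Otimes>\<^sub>M lborel) (\<lambda>p. indicator ({0..1} \<times> S) p *\<^sub>R H (e (fst p) * snd p))"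
  proof (rule integrableI_bounded_set_indicator[where B=B])
    show "{0..1::real} \<times> S \<in> sets (lborel \<Otimes>\<^sub>M lborel)"
      using S by (intro pair_measureI) auto
    show "emeasure (lborel \<Otimes>\<^sub>M lborel) ({0..1::real} \<times> S) < \<infinity>"
      using S finite_S by (simp add: lborel.emeasure_pair_measure_Times ennreal_mult_less_top)
    show "AE p in lborel \<Otimes>\<^sub>M lborel. p \<in> {0..1} \<times> S \<longrightarrow> norm (H (e (fst p) * snd p)) \<le> B"
      using bounded S(2) by (intro AE_I2) (auto simp: H_rotate norm_mult norm_e)
  qed measurable
  also have "(\<lambda>p. indicator ({0..1} \<times> S) p *\<^sub>R H (e (fst p) * snd p))
      = (\<lambda>(t, z). indicator {0..1} t *\<^sub>R H (e t * z))"
    by (auto simp: fun_eq_iff indicator_def H_rotate)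
  finally have Fubini: "(\<integral>t. (\<integral>z. indicator {0..1} t *\<^sub>R H (e t * z) \<partial>lborel) \<partial>lborel)
      = (\<integral>z. (\<integral>t. indicator {0..1} t *\<^sub>R H (e t * z) \<partial>lborel) \<partial>lborel)"
    by (rule lborel_pair.Fubini_integral[symmetric])
  have "(\<integral>z. H z \<partial>lborel) = (\<integral>t. indicator {0..1::real} t *\<^sub>R (\<integral>z. H z \<partial>lborel) \<partial>lborel)"
    by (simp add: integrable_real_indicator)
  also have "\<dots> = (\<integral>t. (\<integral>z. indicator {0..1} t *\<^sub>R H (e t * z) \<partial>lborel) \<partial>lborel)"
    using lborel_integral_rotate[OF norm_e, of H] by simp
  also have "\<dots> = (\<integral>z. indicator S z *\<^sub>R G 0 \<partial>lborel)"
    by (simp only: Fubini circle)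
  also have "\<dots> = measure lborel S *\<^sub>R G 0"
    using finite_S S by simp
  finally show ?thesis
    by (simp only: H_def)
qed

lemma holomorphic_area_mean_Re:
  fixes G :: "complex \<Rightarrow> complex" and S :: "complex set"
  assumes G: "G holomorphic_on ball 0 1" and bounded: "\<And>z. z \<in> ball 0 1 \<Longrightarrow> norm (G z) \<le> B"
    and Re_nonneg: "\<And>z. z \<in> ball 0 1 \<Longrightarrow> 0 \<le> Re (G z)"
    and S: "S \<in> sets borel" "S \<subseteq> ball 0 1"
    and rotate: "\<And>c z. norm c = 1 \<Longrightarrow> c * z \<in> S \<longleftrightarrow> z \<in> S"
  shows "(\<integral>\<^sup>+z. ennreal (indicator S z * Re (G z)) \<partial>lborel) = ennreal (measure lborel S * Re (G 0))"
proof -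
  have "emeasure lborel S < \<infinity>"
    using S(2) by (intro emeasure_bounded_finite bounded_subset[OF bounded_ball])
  moreover have "(\<lambda>z. indicator S z *\<^sub>R G z) \<in> borel_measurable lborel"
    using S holomorphic_on_imp_continuous_on[OF holomorphic_on_subset[OF G S(2)]]
    by (simp add: borel_measurable_continuous_on_indicator)
  ultimately have integrable: "integrable lborel (\<lambda>z. indicator S z *\<^sub>R G z)"
    using S bounded by (intro integrableI_bounded_set[where A=S and B=B]) (auto simp: indicator_def intro!: AE_I2)
  have "(\<integral>\<^sup>+z. ennreal (indicator S z * Re (G z)) \<partial>lborel) = (\<integral>\<^sup>+z. ennreal (Re (indicator S z *\<^sub>R G z)) \<partial>lborel)"
    by simp
  also have "\<dots> = ennreal (\<integral>z. Re (indicator S z *\<^sub>R G z) \<partial>lborel)"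
    using S Re_nonneg by (intro nn_integral_eq_integral integrable_Re[OF integrable] AE_I2) (auto simp: indicator_def)
  also have "(\<integral>z. Re (indicator S z *\<^sub>R G z) \<partial>lborel) = Re (\<integral>z. indicator S z *\<^sub>R G z \<partial>lborel)"
    by (rule integral_Re[OF integrable])
  also have "\<dots> = measure lborel S * Re (G 0)"
    using holomorphic_area_mean_rotation_invariant[OF G bounded S rotate] by simp
  finally show ?thesis .
qed

lemma Re_pos_holomorphic_growth:
  fixes h :: "complex \<Rightarrow> complex"
  assumes h: "h holomorphic_on ball 0 1" and Re_pos: "\<And>z. z \<in> ball 0 1 \<Longrightarrow> Re (h z) > 0"
    and z: "z \<in> ball 0 1"
  shows "norm (h z) * (1 - norm z) \<le> 2 * norm (h 0)"
proof -
  define a where "a = h 0"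
  have Re_a: "Re a > 0"
    using Re_pos[of 0] by (simp add: a_def)
  have den: "h w + cnj a \<noteq> 0" if "w \<in> ball 0 1" for w
    using Re_pos[OF that] Re_a by (auto simp: complex_eq_iff)
  \<comment> \<open>Cayley transform of the right half-plane onto the disc, so that the Schwarz lemma applies.\<close>
  define \<omega> where "\<omega> w = (h w - a) / (h w + cnj a)" for w
  have \<omega>_holo: "\<omega> holomorphic_on ball 0 1"
    unfolding \<omega>_def using den by (intro holomorphic_intros h) auto
  have \<omega>_0: "\<omega> 0 = 0"
    by (simp add: \<omega>_def a_def)
  have \<omega>_lt: "norm (\<omega> w) < 1" if "norm w < 1" for w
  proof -
    have w: "w \<in> ball 0 1"
      using that by simp
    have "norm (h w + cnj a) ^ 2 - norm (h w - a) ^ 2 = 4 * Re a * Re (h w)"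
      unfolding cmod_power2 by (simp add: algebra_simps power2_eq_square)
    then have "norm (h w - a) ^ 2 < norm (h w + cnj a) ^ 2"
      using Re_pos[OF w] Re_a by (smt (verit) mult_pos_pos)
    then have "norm (h w - a) < norm (h w + cnj a)"
      by (simp add: power_less_imp_less_base)
    then show ?thesis
      unfolding \<omega>_def using den[OF w] by (simp add: norm_divide divide_less_eq)
  qed
  have Schwarz: "norm (\<omega> z) \<le> norm z"
    using Schwarz_Lemma(1)[OF \<omega>_holo \<omega>_0 \<omega>_lt] z by simp
  have inverse_Cayley: "h z * (1 - \<omega> z) = a + cnj a * \<omega> z"
    unfolding \<omega>_def using den[OF z] by (simp add: field_simps)
  have "norm (h z) * (1 - norm z) \<le> norm (h z) * norm (1 - \<omega> z)"
    using Schwarz norm_triangle_ineq2[of 1 "\<omega> z"] by (intro mult_left_mono) auto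
  also have "\<dots> = norm (a + cnj a * \<omega> z)"
    by (simp flip: inverse_Cayley norm_mult)
  also have "\<dots> \<le> norm a + norm a * norm (\<omega> z)"
    using norm_triangle_ineq[of a "cnj a * \<omega> z"] by (simp add: norm_mult)
  also have "\<dots> \<le> 2 * norm a"
    using Schwarz z mult_left_le[of "norm (\<omega> z)" "norm a"] by simp
  finally show ?thesis
    by (simp add: a_def)
qed

lemma Re_pos_divide_add_real:
  fixes w :: complex and \<mu> :: real
  assumes w: "Re w > 0" and \<mu>: "\<mu> > 0"
  shows "norm (2 * w / (w + \<mu>)) \<le> 2"
    and "norm (2 * w / (w + \<mu>)) \<le> 2 * norm w / \<mu>"
    and "0 \<le> Re (2 * w / (w + \<mu>))"
    and "\<mu> < norm w \<Longrightarrow> 1 \<le> Re (2 * w / (w + \<mu>))"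
proof -
  have norm_sum: "norm (w + \<mu>) ^ 2 = norm w ^ 2 + 2 * \<mu> * Re w + \<mu> ^ 2"
    unfolding cmod_power2 by (simp add: power2_eq_square algebra_simps)
  moreover have "0 < \<mu> * Re w"
    using w \<mu> by simp
  ultimately have "norm w ^ 2 \<le> norm (w + \<mu>) ^ 2" "\<mu> ^ 2 \<le> norm (w + \<mu>) ^ 2"
    by auto
  then have ge: "norm w \<le> norm (w + \<mu>)" "\<mu> \<le> norm (w + \<mu>)"
    by (auto intro: power2_le_imp_le)
  have pos: "0 < norm (w + \<mu>)"
    using ge \<mu> by linarith
  show "norm (2 * w / (w + \<mu>)) \<le> 2"
    using ge pos by (simp add: norm_divide norm_mult divide_le_eq)
  show "norm (2 * w / (w + \<mu>)) \<le> 2 * norm w / \<mu>"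
    unfolding norm_divide norm_mult using ge \<mu> by (intro frac_le) simp_all
  have Re_eq: "Re (2 * w / (w + \<mu>)) = 2 * (norm w ^ 2 + \<mu> * Re w) / norm (w + \<mu>) ^ 2"
    unfolding Re_divide' cmod_power2[of w] by (simp add: power2_eq_square algebra_simps)
  show "0 \<le> Re (2 * w / (w + \<mu>))"
    unfolding Re_eq using w \<mu> by simp
  show "1 \<le> Re (2 * w / (w + \<mu>))" if "\<mu> < norm w"
  proof -
    have "\<mu> ^ 2 < norm w ^ 2"
      using that \<mu> by (simp add: power_strict_mono)
    then have "norm (w + \<mu>) ^ 2 \<le> 2 * (norm w ^ 2 + \<mu> * Re w)"
      unfolding norm_sum by simp
    then show ?thesis
      unfolding Re_eq using pos by (simp add: le_divide_eq)
  qed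
qed

lemma measure_lborel_ball_complex:
  "0 \<le> r \<Longrightarrow> measure lborel (ball (c::complex) r) = pi * r\<^sup>2"
  by (simp add: content_ball unit_ball_vol_2)

lemma measure_annulus_le:
  assumes "0 \<le> q"
  shows "measure lborel (ball (0::complex) 1 - ball 0 (1 - 2 * q)) \<le> 4 * pi * q"
proof (cases "1 - 2 * q \<le> 0")
  case True
  then have "ball (0::complex) (1 - 2 * q) = {}"
    by (rule ball_empty)
  then have "measure lborel (ball (0::complex) 1 - ball 0 (1 - 2 * q)) = pi * 1"
    by (simp only: Diff_empty) (simp add: measure_lborel_ball_complex)
  also have "\<dots> \<le> pi * (4 * q)"
    using True by (intro mult_left_mono) auto
  finally show ?thesis
    by simp
next
  case False
  have "ball (0::complex) (1 - 2 * q) \<subseteq> ball 0 1"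
    using assms by (intro subset_ball) simp
  with False have "measure lborel (ball (0::complex) 1 - ball 0 (1 - 2 * q)) = pi - pi * (1 - 2 * q)\<^sup>2"
    using emeasure_lborel_ball_finite[of "0::complex" 1]
    by (subst measure_Diff) (auto simp: measure_lborel_ball_complex)
  also have "\<dots> \<le> 4 * pi * q"
    using pi_gt_zero assms by (simp add: power2_eq_square algebra_simps)
  finally show ?thesis .
qed

lemma open_superlevel_set_norm:
  assumes "continuous_on (ball c r) f"
  shows "open {z \<in> ball c r. t < norm (f z)}"
proof -
  have "{z \<in> ball c r. t < norm (f z)} = ball c r \<inter> f -` {w. t < norm w}"
    by auto
  also have "open \<dots>"
    using assms by (intro continuous_open_preimage open_Collect_less continuous_intros) auto
  finally show ?thesis .
qed

lemma Re_pos_holomorphic_level_set: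
  fixes h :: "complex \<Rightarrow> complex"
  assumes h: "h holomorphic_on ball 0 1" and Re_pos: "\<And>z. z \<in> ball 0 1 \<Longrightarrow> Re (h z) > 0"
    and \<mu>: "\<mu> > 0"
  shows "emeasure lborel {z \<in> ball 0 1. \<mu> < norm (h z)} \<le> ennreal (8 * pi * (norm (h 0) / \<mu>)\<^sup>2)"
proof -
  define q where "q = norm (h 0) / \<mu>"
  define E where "E = {z \<in> ball 0 1. \<mu> < norm (h z)}"
  define A where "A = ball (0::complex) 1 - ball 0 (1 - 2 * q)"
  define G where "G z = 2 * h z / (h z + \<mu>)" for z
  have q: "0 \<le> q"
    using \<mu> by (simp add: q_def)
  \<comment> \<open>By the growth bound, \<open>h\<close> can only be large close to the boundary.\<close>
  have "E \<subseteq> A"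
  proof
    fix z assume "z \<in> E"
    then have z: "z \<in> ball 0 1" and "\<mu> < norm (h z)"
      by (auto simp: E_def)
    then have "\<mu> * (1 - norm z) < norm (h z) * (1 - norm z)"
      by simp
    also have "\<dots> \<le> 2 * norm (h 0)"
      by (rule Re_pos_holomorphic_growth[OF h Re_pos z])
    finally show "z \<in> A"
      using z \<mu> by (simp add: A_def q_def field_simps)
  qed
  have E: "E \<in> sets borel"
    unfolding E_def
    by (intro borel_open open_superlevel_set_norm holomorphic_on_imp_continuous_on[OF h])
  have G: "G holomorphic_on ball 0 1"
    unfolding G_def using Re_pos \<mu>
    by (intro holomorphic_intros h) (fastforce simp: complex_eq_iff)
  note bounds = Re_pos_divide_add_real[OF Re_pos \<mu>]
  have mean_bound: "measure lborel A * Re (G 0) \<le> (4 * pi * q) * (2 * q)"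
  proof (rule mult_mono)
    show "measure lborel A \<le> 4 * pi * q"
      unfolding A_def using q by (rule measure_annulus_le)
    show "Re (G 0) \<le> 2 * q"
      using complex_Re_le_cmod[of "G 0"] bounds(2)[of 0] by (simp add: G_def q_def)
  qed (use q bounds(3)[of 0] in \<open>auto simp: G_def\<close>)
  have "emeasure lborel E = (\<integral>\<^sup>+z. indicator E z \<partial>lborel)"
    using E by simp
  also have "\<dots> \<le> (\<integral>\<^sup>+z. ennreal (indicator A z * Re (G z)) \<partial>lborel)"
    using \<open>E \<subseteq> A\<close> bounds(4) by (intro nn_integral_mono) (auto simp: indicator_def E_def G_def)
  also have "\<dots> = ennreal (measure lborel A * Re (G 0))"
    using bounds(1,3) by (intro holomorphic_area_mean_Re[OF G, where B=2]) (auto simp: A_def G_def norm_mult)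
  also have "\<dots> \<le> ennreal ((4 * pi * q) * (2 * q))"
    using mean_bound by (rule ennreal_leI)
  finally show ?thesis
    by (simp add: E_def q_def power2_eq_square mult_ac)
qed

lemma sets_diskA [measurable_cong, simp]: "sets diskA = sets borel"
  by (simp add: diskA_def)

lemma emeasure_diskA:
  assumes "A \<in> sets borel"
  shows "emeasure diskA A = emeasure lborel (A \<inter> ball 0 1) * ennreal (1 / pi)"
proof -
  have "emeasure diskA A = (\<integral>\<^sup>+z. ennreal (1 / pi) * indicator (A \<inter> ball 0 1) z \<partial>lborel)"
    unfolding diskA_def using assms
    by (subst emeasure_density) (auto intro!: nn_integral_cong simp: indicator_def)
  also have "\<dots> = emeasure lborel (A \<inter> ball 0 1) * ennreal (1 / pi)"
    using assms by (subst nn_integral_cmult_indicator) (auto simp: mult.commute)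
  finally show ?thesis .
qed

lemma emeasure_diskA_space: "emeasure diskA (space diskA) = 1"
proof -
  have "emeasure diskA UNIV = ennreal (pi * 1) * ennreal (1 / pi)"
    by (simp add: emeasure_diskA emeasure_ball unit_ball_vol_2 del: mult_1_right)
  then show ?thesis
    by (simp add: diskA_def ennreal_mult[symmetric])
qed

lemma AE_diskA_ball: "AE z in diskA. z \<in> ball 0 1"
  unfolding diskA_def by (subst AE_density) (auto intro!: AE_I2 simp: indicator_def)

lemma sectorG_square_Re_pos:
  assumes "w \<in> sectorG"
  shows "0 < Re (w ^ 2)"
proof -
  have "w ^ 2 = rcis (norm w ^ 2) (2 * Arg w)"
    by (metis DeMoivre2 rcis_cmod_Arg of_nat_numeral)
  moreover have "0 < cos (2 * Arg w)"
    using assms by (intro cos_gt_zero_pi) (auto simp: sectorG_def)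
  ultimately show ?thesis
    using assms by (simp add: sectorG_def)
qed

lemma sectorG_holomorphic_level_set:
  fixes f :: "complex \<Rightarrow> complex"
  assumes f: "f holomorphic_on ball 0 1" "f ` ball 0 1 \<subseteq> sectorG" and lam: "0 < lam"
  shows "emeasure diskA {z \<in> ball 0 1. lam < norm (f z)} \<le> ennreal (8 / lam ^ 4 * norm (f 0) ^ 4)"
proof -
  define E where "E = {z \<in> ball 0 1. lam < norm (f z)}"
  have E_square: "E = {z \<in> ball 0 1. lam ^ 2 < norm (f z ^ 2)}"
    using lam by (auto simp: E_def norm_power power_less_imp_less_base intro: power_strict_mono)
  have "E \<in> sets borel"
    unfolding E_def by (intro borel_open open_superlevel_set_norm holomorphic_on_imp_continuous_on[OF f(1)])
  moreover have "E \<inter> ball 0 1 = E"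
    by (auto simp: E_def)
  ultimately have "emeasure diskA E = emeasure lborel E * ennreal (1 / pi)"
    by (simp add: emeasure_diskA)
  also have "\<dots> \<le> ennreal (8 * pi * (norm (f 0 ^ 2) / lam ^ 2)\<^sup>2) * ennreal (1 / pi)"
    unfolding E_square using f lam
    by (intro mult_right_mono Re_pos_holomorphic_level_set holomorphic_intros sectorG_square_Re_pos) auto
  also have "\<dots> = ennreal (8 / lam ^ 4 * norm (f 0) ^ 4)"
    by (simp add: ennreal_mult[symmetric] norm_power power_divide flip: power_mult)
  finally show ?thesis
    by (simp only: E_def)
qed

lemma ennreal_le_dyadic_tail_sum:
  fixes g s :: real
  assumes s: "0 < s"
  shows "ennreal g \<le> ennreal s + (\<Sum>k. ennreal (s * 2 ^ Suc k) * of_bool (s * 2 ^ k < g))"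
proof -
  let ?a = "\<lambda>k. ennreal (s * 2 ^ Suc k) * of_bool (s * 2 ^ k < g)"
  have partial: "ennreal g \<le> ennreal s + (\<Sum>k<n. ?a k)" if "g \<le> s * 2 ^ n" for n
    using that
  proof (induction n)
    case (Suc n)
    show ?case
    proof (cases "g \<le> s * 2 ^ n")
      case True
      then show ?thesis
        using Suc.IH by (simp add: add_increasing2 order_trans)
    next
      case False
      then have "ennreal g \<le> ?a n"
        using Suc.prems by (simp add: ennreal_leI)
      also have "\<dots> \<le> ennreal s + (\<Sum>k<Suc n. ?a k)"
        by (simp add: add_increasing)
      finally show ?thesis .
    qed
  qed (simp add: ennreal_leI)
  obtain n where "g / s < 2 ^ n"
    using real_arch_pow[of 2 "g / s"] by auto
  then have "ennreal g \<le> ennreal s + (\<Sum>k<n. ?a k)"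
    using s by (intro partial) (simp add: divide_less_eq mult.commute)
  also have "\<dots> \<le> ennreal s + (\<Sum>k. ?a k)"
    by (intro add_left_mono sum_le_suminf) auto
  finally show ?thesis .
qed

lemma nn_integral_le_of_tail_bound:
  fixes g :: "'a \<Rightarrow> real"
  assumes [measurable]: "g \<in> borel_measurable M" and space: "emeasure M (space M) \<le> 1"
    and s: "0 < s" and C: "0 \<le> C"
    and tail: "\<And>t. 0 < t \<Longrightarrow> emeasure M {x \<in> space M. t < g x} \<le> ennreal (C * (s / t)\<^sup>2)"
  shows "(\<integral>\<^sup>+x. ennreal (g x) \<partial>M) \<le> ennreal ((1 + 4 * C) * s)"
proof -
  define E where "E k = {x \<in> space M. s * 2 ^ k < g x}" for k :: nat
  have [measurable]: "E k \<in> sets M" for k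
    unfolding E_def by measurable
  have "(\<integral>\<^sup>+x. ennreal (g x) \<partial>M) \<le> (\<integral>\<^sup>+x. ennreal s + (\<Sum>k. ennreal (s * 2 ^ Suc k) * indicator (E k) x) \<partial>M)"
  proof (rule nn_integral_mono)
    fix x assume "x \<in> space M"
    then have "(indicator (E k) x :: ennreal) = of_bool (s * 2 ^ k < g x)" for k
      by (simp add: E_def indicator_def)
    then show "ennreal (g x) \<le> ennreal s + (\<Sum>k. ennreal (s * 2 ^ Suc k) * indicator (E k) x)"
      by (simp only: ennreal_le_dyadic_tail_sum[OF s])
  qed
  also have "\<dots> = ennreal s * emeasure M (space M) + (\<Sum>k. ennreal (s * 2 ^ Suc k) * emeasure M (E k))"
    by (simp add: nn_integral_add nn_integral_suminf nn_integral_cmult_indicator)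
  also have "\<dots> \<le> ennreal s * 1 + (\<Sum>k. ennreal (2 * C * s * (1 / 2) ^ k))"
  proof (intro add_mono mult_left_mono suminf_le)
    fix k
    have "ennreal (s * 2 ^ Suc k) * emeasure M (E k) \<le> ennreal (s * 2 ^ Suc k) * ennreal (C * (s / (s * 2 ^ k))\<^sup>2)"
      unfolding E_def using s by (intro mult_left_mono tail) auto
    also have "\<dots> = ennreal (2 * C * s * (1 / 2) ^ k)"
      using s C by (simp add: ennreal_mult[symmetric] power2_eq_square field_simps)
    finally show "ennreal (s * 2 ^ Suc k) * emeasure M (E k) \<le> ennreal (2 * C * s * (1 / 2) ^ k)" .
  qed (use space in auto)
  also have "(\<Sum>k. ennreal (2 * C * s * (1 / 2) ^ k)) = ennreal (\<Sum>k. 2 * C * s * (1 / 2) ^ k)"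
    using s C by (intro suminf_ennreal2 summable_mult summable_geometric) auto
  also have "(\<Sum>k. 2 * C * s * (1 / 2 :: real) ^ k) = 4 * C * s"
    using suminf_geometric[of "1 / 2 :: real"] by (subst suminf_mult) (auto simp: summable_geometric)
  finally show ?thesis
    using s C by (simp add: ennreal_plus[symmetric] algebra_simps del: ennreal_plus)
qed

lemma sectorG_holomorphic_L2_bound:
  fixes f :: "complex \<Rightarrow> complex"
  assumes f: "f holomorphic_on ball 0 1" "f ` ball 0 1 \<subseteq> sectorG"
  shows "(\<integral>\<^sup>+z. ennreal (norm (f z) ^ 2) \<partial>diskA) \<le> ennreal ((sqrt 33 * norm (f 0)) ^ 2)"
proof -
  define g where "g z = indicator (ball 0 1) z * norm (f z) ^ 2" for z
  have "f 0 \<in> sectorG"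
    using f(2) by auto
  then have "f 0 \<noteq> 0"
    by (simp add: sectorG_def)
  then have s: "0 < norm (f 0) ^ 2"
    by simp
  have "continuous_on (ball 0 1) (\<lambda>z. norm (f z) ^ 2)"
    using holomorphic_on_imp_continuous_on[OF f(1)] by (intro continuous_intros)
  then have "(\<lambda>z. indicator (ball 0 1) z *\<^sub>R norm (f z) ^ 2) \<in> borel_measurable borel"
    by (intro borel_measurable_continuous_on_indicator) simp_all
  then have "g \<in> borel_measurable diskA"
    unfolding g_def measurable_cong_sets[OF sets_diskA refl] by simp
  moreover have "emeasure diskA {z \<in> space diskA. t < g z} \<le> ennreal (8 * (norm (f 0) ^ 2 / t)\<^sup>2)"
    if t: "0 < t" for t
  proof -
    have "sqrt t < r \<longleftrightarrow> t < r ^ 2" if "0 \<le> r" for r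
      using that by (subst real_sqrt_less_iff[symmetric]) simp
    then have "{z \<in> space diskA. t < g z} = {z \<in> ball 0 1. sqrt t < norm (f z)}"
      using t by (auto simp: g_def diskA_def indicator_def)
    moreover have "sqrt t ^ 4 = t ^ 2"
      using t by (metis real_sqrt_pow2 less_imp_le power_mult num_double numeral_times_numeral)
    ultimately show ?thesis
      using sectorG_holomorphic_level_set[OF f, of "sqrt t"] t by (simp add: power_divide flip: power_mult)
  qed
  ultimately have "(\<integral>\<^sup>+z. ennreal (g z) \<partial>diskA) \<le> ennreal ((1 + 4 * 8) * norm (f 0) ^ 2)"
    using s by (intro nn_integral_le_of_tail_bound) (simp_all add: emeasure_diskA_space)
  moreover have "(\<integral>\<^sup>+z. ennreal (norm (f z) ^ 2) \<partial>diskA) = (\<integral>\<^sup>+z. ennreal (g z) \<partial>diskA)"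
    using AE_diskA_ball by (intro nn_integral_cong_AE) (auto simp: g_def elim!: AE_mp)
  ultimately show ?thesis
    by (simp add: power_mult_distrib)
qed

theorem lemma3p5:
  shows "(\<exists>C2>0. \<forall>(f::complex \<Rightarrow> complex) (lam::real). f holomorphic_on ball 0 1 \<and> f ` ball 0 1 \<subseteq> sectorG \<and> lam > 0 \<longrightarrow>
            measure diskA {z \<in> ball 0 1. norm (f z) > lam} \<le> C2 / lam ^ 4 * norm (f 0) ^ 4)
       \<and> (\<exists>K2>0. \<forall>f::complex \<Rightarrow> complex. f holomorphic_on ball 0 1 \<and> f ` ball 0 1 \<subseteq> sectorG \<longrightarrow>
            (\<integral>\<^sup>+ z. ennreal (norm (f z) ^ 2) \<partial>diskA) \<le> ennreal ((K2 * norm (f 0)) ^ 2))"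
proof (rule conjI[OF exI[of _ 8] exI[of _ "sqrt 33"]]; intro conjI allI impI)
  fix f :: "complex \<Rightarrow> complex" and lam :: real
  assume "f holomorphic_on ball 0 1 \<and> f ` ball 0 1 \<subseteq> sectorG \<and> lam > 0"
  then show "measure diskA {z \<in> ball 0 1. norm (f z) > lam} \<le> 8 / lam ^ 4 * norm (f 0) ^ 4"
    unfolding measure_def by (intro enn2real_leI sectorG_holomorphic_level_set) auto
qed (use sectorG_holomorphic_L2_bound in auto)

end
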